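(* Let $\mathcal{O}$ be a one-counter system with state set $Q$ and let $a\in\mathbb{N}$. There exists a one-counter system $\mathcal{O}_a$ with the same state set $Q$ such that for all $p,q\in Q$ and every $K\in\mathbb{N}$: there is a path of length exactly $K$ from $(p,0)$ to $(q,0)$ in $\mathcal{O}_a$ if and only if there is a path from $(p,a)$ to $(q,a)$ in $\mathcal{O}$ on which exactly $K+1$ of the appearing configurations (counted with multiplicity, i.e., by position along the path) have counter value at least $a$.
   Context: $\mathbb{N}=\{0,1,2,\dots\}$. A one-counter system (OCS) $\mathcal{O}$ consists of a finite set $Q$ of states, a set $T_{>0}\subseteq Q\times\{-1,0,1\}\times Q$ of non-zero transitions and a set $T_{=0}\subseteq Q\times\{0,1\}\times Q$ of zero tests; $T=T_{>0}\cup T_{=0}$. A configuration is a pair $(q,c)\in Q\times\mathbb{N}$, with state $q$ and counter value $c$. A transition $t=(p,d,q)\in T$ can be fired in configuration $(p,c)$ if either $t\in T_{>0}$ and $c>0$, or $t\in T_{=0}$ and $c=0$; the result is $(q,c+d)$, and we write $(p,c)\xrightarrow{t}(q,c+d)$. A path is a sequence $(\gamma_1,t_1)(\gamma_2,t_2)\cdots(\gamma_m,t_m)$ of configurations and transitions such that there are configurations with $\gamma_i\xrightarrow{t_i}\gamma_{i+1}$ for $i=1,\dots,m$; its source is $\gamma_1$, its target is $\gamma_{m+1}$, its length is $m$, the configurations appearing on it are $\gamma_1,\dots,\gamma_{m+1}$, and it is a path from its source to its target. *)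

theory Defs
  imports Main
begin

record 'q ocs =
  states :: "'q set"
  tpos :: "('q \<times> int \<times> 'q) set"
  tzero :: "('q \<times> int \<times> 'q) set"

definition wf_ocs :: "'q ocs \<Rightarrow> bool" where
  "wf_ocs S \<longleftrightarrow> finite (states S)
     \<and> tpos S \<subseteq> states S \<times> {-1, 0, 1} \<times> states S
     \<and> tzero S \<subseteq> states S \<times> {0, 1} \<times> states S"

type_synonym 'q config = "'q \<times> nat"

definition ocs_step :: "'q ocs \<Rightarrow> 'q config \<Rightarrow> ('q \<times> int \<times> 'q) \<Rightarrow> 'q config \<Rightarrow> bool" where
  "ocs_step S \<gamma> t \<gamma>' \<longleftrightarrow>
     (case t of (p, d, q) \<Rightarrow>
        fst \<gamma> = p \<and> fst \<gamma>' = q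
        \<and> ((t \<in> tpos S \<and> snd \<gamma> > 0) \<or> (t \<in> tzero S \<and> snd \<gamma> = 0))
        \<and> int (snd \<gamma>') = int (snd \<gamma>) + d)"

text \<open>A path is given by the list cs of its appearing configurations (gamma_1 .. gamma_(m+1))
  and the list ts of its transitions (t_1 .. t_m); source = hd cs, target = last cs,
  length = length ts.\<close>
definition ocs_path :: "'q ocs \<Rightarrow> 'q config list \<Rightarrow> ('q \<times> int \<times> 'q) list \<Rightarrow> bool" where
  "ocs_path S cs ts \<longleftrightarrow> length cs = length ts + 1
     \<and> (\<forall>i < length ts. ocs_step S (cs ! i) (ts ! i) (cs ! Suc i))"

end

theory Submission
  imports Defs
begin

text \<open>Cut a path of \<open>\<O>\<close> at its configurations of level \<open>\<ge> a\<close>. A segment from one of them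
  to the next is either a single step staying at level \<open>\<ge> a\<close>, or it starts at level \<open>a\<close>, dips
  below \<open>a\<close> and returns to level \<open>a\<close>; in every case a segment starting above level \<open>a\<close> is a
  single non-zero transition, and one starting at level \<open>a\<close> ends at level \<open>a\<close> or \<open>a + 1\<close>.
  Shifting counters down by \<open>a\<close>, \<open>\<O>\<^sub>a\<close> keeps the non-zero transitions of \<open>\<O>\<close> and has a zero
  test \<open>(p, d, q)\<close> whenever some segment leads from \<open>(p, a)\<close> to \<open>(q, a + d)\<close>. Steps of \<open>\<O>\<^sub>a\<close>
  are then exactly the shifted segments, and each segment contributes one configuration of level
  \<open>\<ge> a\<close>, namely its start.\<close>

definition raise :: "nat \<Rightarrow> 'q config \<Rightarrow> 'q config" where
  "raise a \<gamma> = (fst \<gamma>, snd \<gamma> + a)"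

abbreviation count_above :: "nat \<Rightarrow> 'q config list \<Rightarrow> nat" where
  "count_above a cs \<equiv> length (filter (\<lambda>\<gamma>. a \<le> snd \<gamma>) cs)"

inductive first_above :: "'q ocs \<Rightarrow> nat \<Rightarrow> 'q config \<Rightarrow> 'q config \<Rightarrow> bool" for S a where
  first_above_here: "a \<le> snd \<gamma> \<Longrightarrow> first_above S a \<gamma> \<gamma>"
| first_above_step: "snd \<gamma> < a \<Longrightarrow> ocs_step S \<gamma> t \<gamma>1 \<Longrightarrow> first_above S a \<gamma>1 \<gamma>' \<Longrightarrow> first_above S a \<gamma> \<gamma>'"

definition next_above :: "'q ocs \<Rightarrow> nat \<Rightarrow> 'q config \<Rightarrow> 'q config \<Rightarrow> bool" where
  "next_above S a \<gamma> \<gamma>' \<longleftrightarrow> (\<exists>t \<gamma>1. ocs_step S \<gamma> t \<gamma>1 \<and> first_above S a \<gamma>1 \<gamma>')"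

definition ocs_above :: "'q ocs \<Rightarrow> nat \<Rightarrow> 'q ocs" where
  "ocs_above S a = \<lparr>states = states S, tpos = tpos S,
     tzero = {(p, d, q). d \<in> {0, 1} \<and> next_above S a (p, a) (q, a + nat d)}\<rparr>"

lemma ocs_path_Nil: "ocs_path S cs [] \<longleftrightarrow> (\<exists>\<gamma>. cs = [\<gamma>])"
  unfolding ocs_path_def by (auto simp: length_Suc_conv)

lemma ocs_path_nonempty: "ocs_path S cs ts \<Longrightarrow> cs \<noteq> []"
  unfolding ocs_path_def by auto

lemma ocs_path_Cons:
  "ocs_path S cs (t # ts) \<longleftrightarrow> (\<exists>\<gamma> cs'. cs = \<gamma> # cs' \<and> ocs_step S \<gamma> t (hd cs') \<and> ocs_path S cs' ts)"
proof
  assume path: "ocs_path S cs (t # ts)"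
  then obtain \<gamma> \<gamma>' cs'' where "cs = \<gamma> # \<gamma>' # cs''"
    unfolding ocs_path_def by (auto simp: length_Suc_conv)
  with path show "\<exists>\<gamma> cs'. cs = \<gamma> # cs' \<and> ocs_step S \<gamma> t (hd cs') \<and> ocs_path S cs' ts"
    unfolding ocs_path_def by fastforce
next
  assume "\<exists>\<gamma> cs'. cs = \<gamma> # cs' \<and> ocs_step S \<gamma> t (hd cs') \<and> ocs_path S cs' ts"
  then obtain \<gamma> \<gamma>' cs'' where "cs = \<gamma> # \<gamma>' # cs''" "ocs_step S \<gamma> t \<gamma>'" "ocs_path S (\<gamma>' # cs'') ts"
    unfolding ocs_path_def by (auto simp: length_Suc_conv)
  then show "ocs_path S cs (t # ts)"
    unfolding ocs_path_def by (auto simp: less_Suc_eq_0_disj)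
qed

lemma ocs_path_ConsI: "ocs_step S \<gamma> t (hd cs) \<Longrightarrow> ocs_path S cs ts \<Longrightarrow> ocs_path S (\<gamma> # cs) (t # ts)"
  by (auto simp: ocs_path_Cons)

lemma ocs_step_wfD:
  assumes "wf_ocs S" "ocs_step S \<gamma> t \<gamma>'"
  shows "fst \<gamma> \<in> states S \<and> fst \<gamma>' \<in> states S \<and> snd \<gamma>' \<le> snd \<gamma> + 1 \<and> snd \<gamma> \<le> snd \<gamma>' + 1"
proof -
  obtain p d q where t: "t = (p, d, q)" by (cases t)
  with assms(2) have "t \<in> tpos S \<union> tzero S" unfolding ocs_step_def by auto
  with assms(1) t have "p \<in> states S \<and> q \<in> states S \<and> d \<in> {-1, 0, 1}" unfolding wf_ocs_def by auto
  with assms(2) t show ?thesis unfolding ocs_step_def by auto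
qed

lemma first_above_level:
  assumes "wf_ocs S"
  shows "first_above S a \<gamma> \<gamma>' \<Longrightarrow> a \<le> snd \<gamma>' \<and> snd \<gamma>' \<le> max a (snd \<gamma>)"
  by (induction rule: first_above.induct) (use ocs_step_wfD[OF assms] in fastforce)+

lemma first_above_states:
  assumes "wf_ocs S"
  shows "first_above S a \<gamma> \<gamma>' \<Longrightarrow> fst \<gamma> \<in> states S \<Longrightarrow> fst \<gamma>' \<in> states S"
  by (induction rule: first_above.induct) (use ocs_step_wfD[OF assms] in auto)

lemma first_above_high: "first_above S a \<gamma> \<gamma>' \<Longrightarrow> a \<le> snd \<gamma> \<Longrightarrow> \<gamma>' = \<gamma>"
  by (auto elim: first_above.cases)

lemma wf_ocs_above:
  assumes "wf_ocs S"
  shows "wf_ocs (ocs_above S a)"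
proof -
  have "p \<in> states S \<and> q \<in> states S" if "next_above S a (p, a) (q, c)" for p q c
  proof -
    from that obtain t \<gamma>1 where "ocs_step S (p, a) t \<gamma>1" "first_above S a \<gamma>1 (q, c)"
      unfolding next_above_def by blast
    then show ?thesis using ocs_step_wfD[OF assms] first_above_states[OF assms] by fastforce
  qed
  with assms show ?thesis unfolding wf_ocs_def ocs_above_def by auto
qed

lemma ocs_above_step_iff:
  assumes wf: "wf_ocs S"
  shows "(\<exists>t. ocs_step (ocs_above S a) \<gamma> t \<gamma>') \<longleftrightarrow> next_above S a (raise a \<gamma>) (raise a \<gamma>')"
proof -
  obtain p c q c' where \<gamma>: "\<gamma> = (p, c)" "\<gamma>' = (q, c')" by (cases \<gamma>, cases \<gamma>')
  have "next_above S a (p, c + a) (q, c' + a)" if step: "ocs_step (ocs_above S a) (p, c) t (q, c')" for t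
  proof -
    obtain d where t: "t = (p, d, q)" and d: "int c' = int c + d"
      using step unfolding ocs_step_def by (cases t) auto
    from step t consider "t \<in> tpos S" "0 < c" | "t \<in> tzero (ocs_above S a)" "c = 0"
      unfolding ocs_step_def ocs_above_def by auto
    then show ?thesis
    proof cases
      case 1
      with t d have "ocs_step S (p, c + a) t (q, c' + a)" unfolding ocs_step_def by auto
      moreover have "first_above S a (q, c' + a) (q, c' + a)" by (simp add: first_above_here)
      ultimately show ?thesis unfolding next_above_def by blast
    next
      case 2
      with t d show ?thesis unfolding ocs_above_def by (auto simp: add.commute)
    qed
  qed
  moreover have "\<exists>t. ocs_step (ocs_above S a) (p, c) t (q, c')"
    if hop: "next_above S a (p, c + a) (q, c' + a)"
  proof -
    obtain t \<gamma>1 where step: "ocs_step S (p, c + a) t \<gamma>1" and first: "first_above S a \<gamma>1 (q, c' + a)"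
      using hop unfolding next_above_def by blast
    show ?thesis
    proof (cases "c = 0")
      case True
      from first_above_level[OF wf first] ocs_step_wfD[OF wf step] True have "c' \<in> {0, 1}" by auto
      then have "(p, int c', q) \<in> tzero (ocs_above S a)"
        using hop True unfolding ocs_above_def by (auto simp: add.commute)
      with True show ?thesis unfolding ocs_step_def by (intro exI) auto
    next
      case False
      from ocs_step_wfD[OF wf step] False have "\<gamma>1 = (q, c' + a)"
        using first_above_high[OF first] by simp
      with step False have "ocs_step (ocs_above S a) (p, c) t (q, c')"
        unfolding ocs_step_def ocs_above_def by (cases t) auto
      then show ?thesis by blast
    qed
  qed
  ultimately show ?thesis using \<gamma> unfolding raise_def by auto
qed

lemma first_above_path:
  "first_above S a \<gamma> \<gamma>' \<Longrightarrow> ocs_path S cs ts \<Longrightarrow> hd cs = \<gamma>' \<Longrightarrow>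
    \<exists>cs' ts'. ocs_path S cs' ts' \<and> hd cs' = \<gamma> \<and> last cs' = last cs \<and> count_above a cs' = count_above a cs"
proof (induction arbitrary: cs ts rule: first_above.induct)
  case (first_above_here \<gamma>)
  then show ?case by blast
next
  case (first_above_step \<gamma> t \<gamma>1 \<gamma>')
  then obtain cs' ts' where path: "ocs_path S cs' ts'" "hd cs' = \<gamma>1" "last cs' = last cs"
    and count: "count_above a cs' = count_above a cs" by blast
  with first_above_step have "ocs_path S (\<gamma> # cs') (t # ts')" by (simp add: ocs_path_ConsI)
  with path count ocs_path_nonempty first_above_step.hyps(1) show ?case by fastforce
qed

lemma next_above_path:
  assumes "next_above S a \<gamma> \<gamma>'" "a \<le> snd \<gamma>" "ocs_path S cs ts" "hd cs = \<gamma>'"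
  shows "\<exists>cs' ts'. ocs_path S cs' ts' \<and> hd cs' = \<gamma> \<and> last cs' = last cs
    \<and> count_above a cs' = Suc (count_above a cs)"
proof -
  obtain t \<gamma>1 where step: "ocs_step S \<gamma> t \<gamma>1" and first: "first_above S a \<gamma>1 \<gamma>'"
    using assms(1) unfolding next_above_def by blast
  obtain cs' ts' where path: "ocs_path S cs' ts'" "hd cs' = \<gamma>1" "last cs' = last cs"
    and count: "count_above a cs' = count_above a cs"
    using first_above_path[OF first assms(3,4)] by blast
  from step path have "ocs_path S (\<gamma> # cs') (t # ts')" by (simp add: ocs_path_ConsI)
  with path count ocs_path_nonempty assms(2) show ?thesis by fastforce
qed

lemma lift_path:
  assumes wf: "wf_ocs S"
  shows "ocs_path (ocs_above S a) cs ts \<Longrightarrow> \<exists>cs' ts'. ocs_path S cs' ts'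
    \<and> hd cs' = raise a (hd cs) \<and> last cs' = raise a (last cs) \<and> count_above a cs' = length ts + 1"
proof (induction ts arbitrary: cs)
  case Nil
  then obtain \<gamma> where "cs = [\<gamma>]" by (auto simp: ocs_path_Nil)
  moreover have "ocs_path S [raise a \<gamma>] []" by (simp add: ocs_path_Nil)
  ultimately show ?case by (auto simp: raise_def)
next
  case (Cons t ts)
  then obtain \<gamma> cs' where cs: "cs = \<gamma> # cs'" and step: "ocs_step (ocs_above S a) \<gamma> t (hd cs')"
    and path: "ocs_path (ocs_above S a) cs' ts" by (auto simp: ocs_path_Cons)
  obtain cs'' ts'' where lifted: "ocs_path S cs'' ts''" "hd cs'' = raise a (hd cs')"
    "last cs'' = raise a (last cs')" "count_above a cs'' = length ts + 1"
    using Cons.IH[OF path] by blast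
  have "next_above S a (raise a \<gamma>) (raise a (hd cs'))"
    using step ocs_above_step_iff[OF wf] by blast
  from next_above_path[OF this _ lifted(1,2)] lifted(3,4) cs ocs_path_nonempty[OF path]
  show ?case by (auto simp: raise_def)
qed

lemma project_path:
  assumes wf: "wf_ocs S"
  shows "ocs_path S cs ts \<Longrightarrow> a \<le> snd (last cs) \<Longrightarrow>
    \<exists>\<gamma>' cs' ts'. first_above S a (hd cs) \<gamma>' \<and> ocs_path (ocs_above S a) cs' ts'
      \<and> raise a (hd cs') = \<gamma>' \<and> raise a (last cs') = last cs \<and> length ts' + 1 = count_above a cs"
proof (induction ts arbitrary: cs)
  case Nil
  then obtain \<gamma> where \<gamma>: "cs = [\<gamma>]" by (auto simp: ocs_path_Nil)
  with Nil.prems have "first_above S a \<gamma> \<gamma>" by (simp add: first_above_here)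
  moreover have "ocs_path (ocs_above S a) [(fst \<gamma>, snd \<gamma> - a)] []" by (simp add: ocs_path_Nil)
  ultimately show ?case using \<gamma> Nil.prems by (intro exI) (auto simp: raise_def)
next
  case (Cons t ts)
  then obtain \<gamma> cs1 where cs: "cs = \<gamma> # cs1" and step: "ocs_step S \<gamma> t (hd cs1)"
    and path: "ocs_path S cs1 ts" by (auto simp: ocs_path_Cons)
  with Cons.prems ocs_path_nonempty have "a \<le> snd (last cs1)" by fastforce
  with Cons.IH[OF path] obtain \<gamma>' cs' ts' where first: "first_above S a (hd cs1) \<gamma>'"
    and projected: "ocs_path (ocs_above S a) cs' ts'" "raise a (hd cs') = \<gamma>'"
      "raise a (last cs') = last cs1" "length ts' + 1 = count_above a cs1" by blast
  have last: "last cs = last cs1" using cs ocs_path_nonempty[OF path] by simp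
  show ?case
  proof (cases "a \<le> snd \<gamma>")
    case True
    let ?\<delta> = "(fst \<gamma>, snd \<gamma> - a)"
    have "raise a ?\<delta> = \<gamma>" using True by (simp add: raise_def)
    moreover have "next_above S a \<gamma> (raise a (hd cs'))"
      using step first projected(2) unfolding next_above_def by blast
    ultimately have "next_above S a (raise a ?\<delta>) (raise a (hd cs'))" by simp
    then obtain t' where "ocs_step (ocs_above S a) ?\<delta> t' (hd cs')"
      using ocs_above_step_iff[OF wf] by blast
    then have "ocs_path (ocs_above S a) (?\<delta> # cs') (t' # ts')"
      using projected(1) by (rule ocs_path_ConsI)
    moreover have "first_above S a \<gamma> \<gamma>" using True by (rule first_above_here)
    ultimately show ?thesis using True cs last projected ocs_path_nonempty[OF projected(1)]
      by (intro exI[of _ \<gamma>] exI[of _ "?\<delta> # cs'"] exI[of _ "t' # ts'"]) (auto simp: raise_def)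
  next
    case False
    then have "first_above S a \<gamma> \<gamma>'" using step first by (auto intro: first_above_step)
    with False cs last projected show ?thesis
      by (intro exI[of _ \<gamma>'] exI[of _ cs'] exI[of _ ts']) simp
  qed
qed

theorem mainTheorem13:
  fixes S :: "'q ocs" and a :: nat
  assumes "wf_ocs S"
  shows "\<exists>Oa :: 'q ocs. wf_ocs Oa \<and> states Oa = states S \<and>
    (\<forall>p \<in> states S. \<forall>q \<in> states S. \<forall>K :: nat.
      (\<exists>cs ts. ocs_path Oa cs ts \<and> length ts = K \<and> hd cs = (p, 0) \<and> last cs = (q, 0))
      \<longleftrightarrow>
      (\<exists>cs ts. ocs_path S cs ts \<and> hd cs = (p, a) \<and> last cs = (q, a)
         \<and> length (filter (\<lambda>\<gamma>. snd \<gamma> \<ge> a) cs) = K + 1))"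
proof (intro exI[of _ "ocs_above S a"] conjI ballI allI iffI)
  show "wf_ocs (ocs_above S a)" using assms by (rule wf_ocs_above)
  show "states (ocs_above S a) = states S" by (simp add: ocs_above_def)
next
  fix p q K
  assume "\<exists>cs ts. ocs_path (ocs_above S a) cs ts \<and> length ts = K \<and> hd cs = (p, 0) \<and> last cs = (q, 0)"
  with lift_path[OF assms] show "\<exists>cs ts. ocs_path S cs ts \<and> hd cs = (p, a) \<and> last cs = (q, a)
    \<and> count_above a cs = K + 1" by (fastforce simp: raise_def)
next
  fix p q K
  assume "\<exists>cs ts. ocs_path S cs ts \<and> hd cs = (p, a) \<and> last cs = (q, a) \<and> count_above a cs = K + 1"
  then obtain cs ts where path: "ocs_path S cs ts" "hd cs = (p, a)" "last cs = (q, a)"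
    and count: "count_above a cs = K + 1" by blast
  have "a \<le> snd (last cs)" using path(3) by simp
  from project_path[OF assms path(1) this] obtain \<gamma>' cs' ts' where
    "first_above S a (p, a) \<gamma>'" "ocs_path (ocs_above S a) cs' ts'" "raise a (hd cs') = \<gamma>'"
    "raise a (last cs') = (q, a)" "length ts' = K"
    unfolding path(2,3) count by auto
  with first_above_high show "\<exists>cs ts. ocs_path (ocs_above S a) cs ts \<and> length ts = K
    \<and> hd cs = (p, 0) \<and> last cs = (q, 0)" by (fastforce simp: raise_def prod_eq_iff)
qed

end
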